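(* Let $(G,u,v,\alpha,\beta)$ be a Guvab, and suppose it is not the case that ($G$ is bipartite, $\alpha=0$, and $\beta=1$). Then $W:=\lim_{k\to\infty}W(\mu_k,\nu_k)$ exists, and furthermore: (a) $W=0$ if one of the following holds: $0<\alpha\le\beta<1$; or $\alpha=\beta=1$ and $u=v$; or $G$ is not bipartite and $0=\alpha\le\beta<1$; or $\alpha=\beta=0$ and there is a walk from $u$ to $v$ with an even number of steps; (b) $W=1$ if $\alpha=\beta=0$ and $W\ne0$; (c) $W=\frac12$ if $0=\alpha<\beta<1$ and $G$ is bipartite.
   Context: A Guvab is a tuple $(G,u,v,\alpha,\beta)$ where $G$ is a finite, connected, simple graph, $u,v\in V(G)$, and $\alpha,\beta\in[0,1]$ with $\alpha\le\beta$. A random walk on $G$ with starting vertex $w$ and laziness $\gamma$ is the Markov chain $R_0=w$ and, for $i\ge1$, $R_i=R_{i-1}$ with probability $\gamma$ and $R_i=t$ with probability $\frac{1-\gamma}{\deg(R_{i-1})}$ for each neighbor $t$ of $R_{i-1}$. $\mu_k$ is the distribution after $k$ steps of the walk from $u$ with laziness $\alpha$, and $\nu_k$ that of the walk from $v$ with laziness $\beta$. $W(\mu,\nu)$ is the Wasserstein ($L^1$ optimal transport) distance with respect to the graph distance: the minimum over transportation plans (nonnegative $T$ on $V(G)\times V(G)$ with marginals $\mu,\nu$) of $\sum d(w_1,w_2)T(w_1,w_2)$. *)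

theory Defs
  imports Complex_Main
begin

definition simple_graph :: "'a set \<Rightarrow> ('a \<Rightarrow> 'a \<Rightarrow> bool) \<Rightarrow> bool" where
  "simple_graph V E \<longleftrightarrow> finite V \<and> (\<forall>x y. E x y \<longrightarrow> x \<in> V \<and> y \<in> V)
     \<and> (\<forall>x y. E x y \<longrightarrow> E y x) \<and> (\<forall>x. \<not> E x x)"

definition connected_graph :: "'a set \<Rightarrow> ('a \<Rightarrow> 'a \<Rightarrow> bool) \<Rightarrow> bool" where
  "connected_graph V E \<longleftrightarrow> V \<noteq> {} \<and> (\<forall>x\<in>V. \<forall>y\<in>V. \<exists>n. (E ^^ n) x y)"

definition bipartite :: "'a set \<Rightarrow> ('a \<Rightarrow> 'a \<Rightarrow> bool) \<Rightarrow> bool" where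
  "bipartite V E \<longleftrightarrow> (\<exists>A. A \<subseteq> V \<and> (\<forall>x y. E x y \<longrightarrow> (x \<in> A \<longleftrightarrow> y \<notin> A)))"

definition graph_dist :: "('a \<Rightarrow> 'a \<Rightarrow> bool) \<Rightarrow> 'a \<Rightarrow> 'a \<Rightarrow> nat" where
  "graph_dist E x y = (LEAST n. (E ^^ n) x y)"

definition degree :: "'a set \<Rightarrow> ('a \<Rightarrow> 'a \<Rightarrow> bool) \<Rightarrow> 'a \<Rightarrow> nat" where
  "degree V E x = card {t \<in> V. E x t}"

definition trans_prob :: "'a set \<Rightarrow> ('a \<Rightarrow> 'a \<Rightarrow> bool) \<Rightarrow> real \<Rightarrow> 'a \<Rightarrow> 'a \<Rightarrow> real" where
  "trans_prob V E \<gamma> x y =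
     (if x = y then \<gamma> else 0) + (if E x y then (1 - \<gamma>) / real (degree V E x) else 0)"

primrec walk_dist :: "'a set \<Rightarrow> ('a \<Rightarrow> 'a \<Rightarrow> bool) \<Rightarrow> real \<Rightarrow> 'a \<Rightarrow> nat \<Rightarrow> 'a \<Rightarrow> real" where
  "walk_dist V E \<gamma> w 0 = (\<lambda>y. if y = w then 1 else 0)"
| "walk_dist V E \<gamma> w (Suc k) =
     (\<lambda>y. \<Sum>x\<in>V. walk_dist V E \<gamma> w k x * trans_prob V E \<gamma> x y)"

definition transport_plan :: "'a set \<Rightarrow> ('a \<Rightarrow> real) \<Rightarrow> ('a \<Rightarrow> real) \<Rightarrow> ('a \<Rightarrow> 'a \<Rightarrow> real) \<Rightarrow> bool" where
  "transport_plan V \<mu> \<nu> T \<longleftrightarrow>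
     (\<forall>x\<in>V. \<forall>y\<in>V. T x y \<ge> 0)
   \<and> (\<forall>x\<in>V. (\<Sum>y\<in>V. T x y) = \<mu> x)
   \<and> (\<forall>y\<in>V. (\<Sum>x\<in>V. T x y) = \<nu> y)"

definition wasserstein :: "'a set \<Rightarrow> ('a \<Rightarrow> 'a \<Rightarrow> bool) \<Rightarrow> ('a \<Rightarrow> real) \<Rightarrow> ('a \<Rightarrow> real) \<Rightarrow> real" where
  "wasserstein V E \<mu> \<nu> =
     Inf {(\<Sum>x\<in>V. \<Sum>y\<in>V. real (graph_dist E x y) * T x y) | T. transport_plan V \<mu> \<nu> T}"

end

theory Submission
  imports Defs
begin

text \<open>
  For laziness \<gamma> < 1 the walk is aperiodic unless \<gamma> = 0 and G is bipartite. Then some power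
  of the transition matrix is bounded below by a positive constant, so by Doeblin's argument the
  distributions converge in L1 to the degree distribution \<pi>. On a bipartite graph the simple
  walk (\<gamma> = 0) observed at even times is aperiodic on the colour class A of its start, so it
  alternates in the limit between \<pi> conditioned on A and \<pi> conditioned on the other class B.
  Since W is Lipschitz in L1 (with the diameter as constant), W(\<mu>_k, \<nu>_k) tends to the distance
  of the limits: W(\<pi>, \<pi>) = 0; W(\<pi>_A, \<pi>_B) = 1, because one simple step carries \<pi>_A to \<pi>_B
  along edges while all mass has to leave A; and W(\<pi>_A, \<pi>) = 1/2, because one step with
  laziness 1/2 carries \<pi>_A to \<pi> while half of \<pi> lies outside A. With laziness 1 nothing moves.
\<close>

lemma finite_uniform_bound:
  assumes "finite S" and "\<And>s. s \<in> S \<Longrightarrow> \<exists>n::nat. Q s n"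
  shows "\<exists>N. \<forall>s\<in>S. \<exists>n\<le>N. Q s n"
proof -
  have "\<forall>s\<in>S. \<exists>n. Q s n" using assms(2) by blast
  then obtain f where "\<forall>s\<in>S. Q s (f s)" by (auto dest: bchoice)
  moreover have "f s \<le> Max (f ` S)" if "s \<in> S" for s
    using assms(1) that by simp
  ultimately show ?thesis by blast
qed

lemma doeblin_contraction:
  fixes d \<rho> :: "'a \<Rightarrow> real" and K :: "'a \<Rightarrow> 'a \<Rightarrow> real"
  assumes "finite V" and "C \<subseteq> V"
    and row_sum: "\<And>x. x \<in> V \<Longrightarrow> (\<Sum>y\<in>V. K x y) = 1"
    and minor: "\<And>x y. x \<in> C \<Longrightarrow> y \<in> V \<Longrightarrow> \<rho> y \<le> K x y"
    and supp: "\<And>x. x \<in> V - C \<Longrightarrow> d x = 0"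
    and mass: "(\<Sum>x\<in>V. d x) = 0"
  shows "(\<Sum>y\<in>V. \<bar>\<Sum>x\<in>V. d x * K x y\<bar>) \<le> (1 - (\<Sum>y\<in>V. \<rho> y)) * (\<Sum>x\<in>V. \<bar>d x\<bar>)"
proof -
  \<comment> \<open>Since d has total mass 0, subtracting the minorant \<rho> from every row of K changes nothing.\<close>
  have shift: "(\<Sum>x\<in>V. d x * K x y) = (\<Sum>x\<in>V. d x * (K x y - \<rho> y))" for y
    using mass by (simp add: right_diff_distrib sum_subtractf flip: sum_distrib_right)
  have abs_term: "\<bar>d x * (K x y - \<rho> y)\<bar> = \<bar>d x\<bar> * (K x y - \<rho> y)" if "x \<in> V" "y \<in> V" for x y
    using minor[of x y] supp[of x] that by (cases "x \<in> C") (auto simp: abs_mult)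
  have "(\<Sum>y\<in>V. \<bar>\<Sum>x\<in>V. d x * K x y\<bar>) \<le> (\<Sum>y\<in>V. \<Sum>x\<in>V. \<bar>d x\<bar> * (K x y - \<rho> y))"
    unfolding shift by (intro sum_mono order_trans[OF sum_abs]) (simp add: abs_term)
  also have "\<dots> = (\<Sum>x\<in>V. \<bar>d x\<bar> * ((\<Sum>y\<in>V. K x y) - (\<Sum>y\<in>V. \<rho> y)))"
    by (subst sum.swap) (simp add: sum_distrib_left right_diff_distrib sum_subtractf)
  also have "\<dots> = (1 - (\<Sum>y\<in>V. \<rho> y)) * (\<Sum>x\<in>V. \<bar>d x\<bar>)"
    by (simp add: row_sum sum_distrib_left mult.commute)
  finally show ?thesis .
qed

lemma tendsto_zero_decreasing_geometric:
  fixes e :: "nat \<Rightarrow> real"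
  assumes nonneg: "\<And>k. 0 \<le> e k" and decr: "\<And>k. e (Suc k) \<le> e k"
    and contr: "\<And>j. e (Suc j * m) \<le> c * e (j * m)" and "0 \<le> c" "c < 1"
  shows "e \<longlonglongrightarrow> 0"
proof (rule order_tendstoI)
  show "\<forall>\<^sub>F n in sequentially. a < e n" if "a < 0" for a
    using nonneg that less_le_trans by (blast intro: always_eventually)
next
  fix r :: real assume "0 < r"
  have geometric: "e (j * m) \<le> c ^ j * e 0" for j
  proof (induction j)
    case (Suc j)
    have "e (Suc j * m) \<le> c * (c ^ j * e 0)"
      using contr[of j] mult_left_mono[OF Suc.IH \<open>0 \<le> c\<close>] by linarith
    then show ?case by (simp add: mult.assoc)
  qed simp
  have "(\<lambda>j. c ^ j * e 0) \<longlonglongrightarrow> 0"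
    using assms(4,5) by (intro tendsto_mult_left_zero LIMSEQ_power_zero) simp
  then have "\<forall>\<^sub>F j in sequentially. c ^ j * e 0 < r"
    using \<open>0 < r\<close> by (rule order_tendstoD)
  then obtain j where "c ^ j * e 0 < r"
    by (auto simp: eventually_sequentially)
  moreover have "decseq e" using decr by (simp add: decseq_Suc_iff)
  ultimately have "e n < r" if "j * m \<le> n" for n
    using geometric[of j] decseqD[OF \<open>decseq e\<close> that] by linarith
  then show "\<forall>\<^sub>F n in sequentially. e n < r"
    by (auto simp: eventually_sequentially)
qed

locale nontrivial_connected_graph =
  fixes V :: "'a set" and E :: "'a \<Rightarrow> 'a \<Rightarrow> bool"
  assumes simple: "simple_graph V E" and connected: "connected_graph V E"
    and two_vertices: "card V \<ge> 2"
begin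

lemma finite_vertices: "finite V"
  using simple by (simp add: simple_graph_def)

lemma edge_vertices: "E x y \<Longrightarrow> x \<in> V \<and> y \<in> V"
  using simple by (simp add: simple_graph_def)

lemma edge_sym: "E x y \<Longrightarrow> E y x"
  using simple by (simp add: simple_graph_def)

lemma no_loop: "\<not> E x x"
  using simple by (simp add: simple_graph_def)

lemma walk_exists: "x \<in> V \<Longrightarrow> y \<in> V \<Longrightarrow> \<exists>n. (E ^^ n) x y"
  using connected by (auto simp: connected_graph_def)

lemma exists_neighbour:
  assumes "x \<in> V"
  shows "\<exists>z. E x z"
proof -
  have "\<not> V \<subseteq> {x}"
    using two_vertices card_mono[of "{x}" V] by auto
  then obtain y where "y \<in> V" "y \<noteq> x" by blast
  moreover obtain n where "(E ^^ n) x y"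
    using walk_exists assms \<open>y \<in> V\<close> by blast
  ultimately obtain m where "(E ^^ Suc m) x y" by (cases n) auto
  then show ?thesis by (blast dest: relpowp_Suc_D2)
qed

lemma degree_pos: "x \<in> V \<Longrightarrow> 0 < degree V E x"
proof -
  assume "x \<in> V"
  then obtain z where "E x z" using exists_neighbour by blast
  then have "z \<in> {t \<in> V. E x t}" using edge_vertices by auto
  then show ?thesis unfolding degree_def using finite_vertices by (auto simp: card_gt_0_iff)
qed

lemma degree_le_card: "degree V E x \<le> card V"
  unfolding degree_def using finite_vertices by (intro card_mono) auto

lemma card_in_neighbours: "card {x \<in> V. E x y} = degree V E y"
  unfolding degree_def using edge_sym by metis

lemma walk_sym: "(E ^^ n) x y \<Longrightarrow> (E ^^ n) y x"
proof (induction n arbitrary: y)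
  case (Suc n)
  then obtain z where "(E ^^ n) x z" "E z y" by (meson relpowp_Suc_E)
  then show ?case using Suc.IH edge_sym by (blast intro: relpowp_Suc_I2)
qed simp

lemma closed_walk_even: "y \<in> V \<Longrightarrow> (E ^^ (2 * j)) y y"
proof (induction j)
  case (Suc j)
  obtain z where "E y z" using exists_neighbour Suc.prems by blast
  then have "(E ^^ 2) y y"
    using edge_sym by (metis One_nat_def Suc_1 relpowp_1 relpowp_Suc_I)
  with Suc have "(E ^^ (2 * j + 2)) y y" by (blast intro: relpowp_trans)
  then show ?case by (simp only: mult_Suc_right add.commute)
qed simp

lemma walk_add_even: "(E ^^ n) x y \<Longrightarrow> y \<in> V \<Longrightarrow> (E ^^ (n + 2 * j)) x y"
  using closed_walk_even relpowp_trans by metis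

section \<open>Lazy random walk operator\<close>

abbreviation P :: "real \<Rightarrow> 'a \<Rightarrow> 'a \<Rightarrow> real" where
  "P \<gamma> \<equiv> trans_prob V E \<gamma>"

definition walk_step :: "real \<Rightarrow> ('a \<Rightarrow> real) \<Rightarrow> 'a \<Rightarrow> real" where
  "walk_step \<gamma> \<mu> y = (\<Sum>x\<in>V. \<mu> x * P \<gamma> x y)"

lemma walk_dist_Suc_step: "walk_dist V E \<gamma> w (Suc k) = walk_step \<gamma> (walk_dist V E \<gamma> w k)"
  by (simp add: walk_step_def fun_eq_iff)

lemma trans_prob_nonneg: "0 \<le> \<gamma> \<Longrightarrow> \<gamma> \<le> 1 \<Longrightarrow> 0 \<le> P \<gamma> x y"
  by (simp add: trans_prob_def)

lemma trans_prob_row_sum: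
  assumes "x \<in> V"
  shows "(\<Sum>y\<in>V. P \<gamma> x y) = 1"
proof -
  have "(\<Sum>y\<in>V. P \<gamma> x y)
      = \<gamma> + real (card {y \<in> V. E x y}) * ((1 - \<gamma>) / real (degree V E x))"
    unfolding trans_prob_def sum.distrib using assms finite_vertices
    by (simp add: sum.If_cases Int_def)
  then show ?thesis using degree_pos[OF assms] by (simp add: degree_def)
qed

lemma trans_prob_edge_ge:
  assumes "E x y" and "\<gamma> \<le> 1"
  shows "(1 - \<gamma>) / real (card V) \<le> P \<gamma> x y"
proof -
  have "0 < degree V E x" using degree_pos edge_vertices assms(1) by blast
  moreover have "0 < card V" using two_vertices by simp
  ultimately have "(1 - \<gamma>) / real (card V) \<le> (1 - \<gamma>) / real (degree V E x)"
    using degree_le_card assms(2) by (intro divide_left_mono) auto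
  then show ?thesis using assms(1) no_loop by (auto simp: trans_prob_def)
qed

lemma walk_step_sum: "(\<Sum>y\<in>V. walk_step \<gamma> \<mu> y) = (\<Sum>x\<in>V. \<mu> x)"
  unfolding walk_step_def
  by (subst sum.swap) (simp add: trans_prob_row_sum flip: sum_distrib_left)

lemma walk_step_diff: "walk_step \<gamma> (\<lambda>x. \<mu> x - \<nu> x) y = walk_step \<gamma> \<mu> y - walk_step \<gamma> \<nu> y"
  unfolding walk_step_def by (simp add: left_diff_distrib sum_subtractf)

lemma walk_step_simple: "walk_step 0 \<mu> y = (\<Sum>x\<in>V. if E x y then \<mu> x / real (degree V E x) else 0)"
  unfolding walk_step_def trans_prob_def by (intro sum.cong) auto

lemma walk_step_lazy:
  assumes "y \<in> V"
  shows "walk_step \<gamma> \<mu> y = \<gamma> * \<mu> y + (1 - \<gamma>) * walk_step 0 \<mu> y"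
proof -
  have "walk_step \<gamma> \<mu> y = (\<Sum>x\<in>V. (if x = y then \<gamma> * \<mu> x else 0)
      + (1 - \<gamma>) * (if E x y then \<mu> x / real (degree V E x) else 0))"
    unfolding walk_step_def trans_prob_def
    by (intro sum.cong) (auto simp: no_loop algebra_simps simp flip: add_divide_distrib)
  then show ?thesis
    using assms finite_vertices by (simp add: sum.distrib walk_step_simple sum_distrib_left)
qed

lemma walk_step_laziness_one: "walk_step 1 \<mu> y = (if y \<in> V then \<mu> y else 0)"
proof -
  have "walk_step 1 \<mu> y = (\<Sum>x\<in>V. if x = y then \<mu> x else 0)"
    unfolding walk_step_def trans_prob_def by (intro sum.cong) auto
  then show ?thesis using finite_vertices by simp
qed

lemma walk_dist_nonneg: "0 \<le> \<gamma> \<Longrightarrow> \<gamma> \<le> 1 \<Longrightarrow> 0 \<le> walk_dist V E \<gamma> w k y"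
  by (induction k arbitrary: y) (auto intro!: sum_nonneg mult_nonneg_nonneg trans_prob_nonneg)

lemma walk_dist_sum:
  assumes "w \<in> V"
  shows "(\<Sum>y\<in>V. walk_dist V E \<gamma> w k y) = 1"
proof (induction k)
  case 0
  show ?case using assms finite_vertices by simp
next
  case (Suc k)
  then show ?case unfolding walk_dist_Suc_step walk_step_sum .
qed

lemma walk_dist_laziness_one: "w \<in> V \<Longrightarrow> walk_dist V E 1 w k = walk_dist V E 1 w 0"
proof (induction k)
  case (Suc k)
  then show ?case unfolding walk_dist_Suc_step by (auto simp: walk_step_laziness_one fun_eq_iff)
qed simp

lemma walk_step_orbit_kernel:
  assumes orbit: "\<And>k y. y \<in> V \<Longrightarrow> f (Suc k) y = walk_step \<gamma> (f k) y" and "y \<in> V"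
  shows "f (k + m) y = (\<Sum>x\<in>V. f k x * walk_dist V E \<gamma> x m y)"
  using \<open>y \<in> V\<close>
proof (induction m arbitrary: y)
  case 0
  then show ?case using finite_vertices by (simp add: if_distrib cong: if_cong)
next
  case (Suc m)
  have "f (k + Suc m) y = (\<Sum>z\<in>V. f (k + m) z * P \<gamma> z y)"
    using orbit[OF Suc.prems] by (simp add: walk_step_def)
  also have "\<dots> = (\<Sum>z\<in>V. (\<Sum>x\<in>V. f k x * walk_dist V E \<gamma> x m z) * P \<gamma> z y)"
    by (intro sum.cong refl) (simp add: Suc.IH)
  also have "\<dots> = (\<Sum>x\<in>V. f k x * (\<Sum>z\<in>V. walk_dist V E \<gamma> x m z * P \<gamma> z y))"
    unfolding sum_distrib_left sum_distrib_right mult.assoc by (rule sum.swap)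
  finally show ?case by simp
qed

section \<open>Uniform lower bounds and contraction\<close>

lemma walk_dist_ge_power:
  assumes R: "\<And>z w. R z w \<Longrightarrow> z \<in> V \<and> q \<le> P \<gamma> z w"
    and "0 \<le> q" "0 \<le> \<gamma>" "\<gamma> \<le> 1"
  shows "(R ^^ k) x y \<Longrightarrow> q ^ k \<le> walk_dist V E \<gamma> x k y"
proof (induction k arbitrary: y)
  case (Suc k)
  then obtain z where z: "(R ^^ k) x z" "R z y" by (meson relpowp_Suc_E)
  have "q ^ Suc k \<le> walk_dist V E \<gamma> x k z * P \<gamma> z y"
    using Suc.IH[OF z(1)] R[OF z(2)] assms(2-4) walk_dist_nonneg
    by (simp add: mult.commute mult_mono)
  also have "\<dots> \<le> (\<Sum>z'\<in>V. walk_dist V E \<gamma> x k z' * P \<gamma> z' y)"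
    using R[OF z(2)] assms(3,4) finite_vertices
    by (intro member_le_sum) (auto intro!: mult_nonneg_nonneg walk_dist_nonneg trans_prob_nonneg)
  finally show ?case by simp
qed simp

lemma walk_dist_simple_nonzero: "walk_dist V E 0 w k y \<noteq> 0 \<Longrightarrow> (E ^^ k) w y"
proof (induction k arbitrary: y)
  case 0
  then show ?case by (simp split: if_splits)
next
  case (Suc k)
  then have "(\<Sum>x\<in>V. walk_dist V E 0 w k x * P 0 x y) \<noteq> 0" by simp
  then obtain x where "x \<in> V" "walk_dist V E 0 w k x * P 0 x y \<noteq> 0"
    by (rule sum.not_neutral_contains_not_neutral)
  then have "walk_dist V E 0 w k x \<noteq> 0" "E x y"
    by (auto simp: trans_prob_def split: if_splits)
  then show ?case using Suc.IH by (blast intro: relpowp_Suc_I)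
qed

lemma lazy_walk_dist_lower_bound:
  assumes "0 < \<gamma>" "\<gamma> < 1"
  shows "\<exists>m. \<exists>q>0. \<forall>x\<in>V. \<forall>y\<in>V. q \<le> walk_dist V E \<gamma> x m y"
proof -
  \<comment> \<open>Steps of the lazy walk: staying put has probability \<gamma>, moving along an edge at least
    (1 - \<gamma>) / |V|; so any walk can be padded with loops to a common length.\<close>
  define R where "R z w \<longleftrightarrow> z \<in> V \<and> (z = w \<or> E z w)" for z w
  define q where "q = min \<gamma> ((1 - \<gamma>) / real (card V))"
  have "0 < q" using assms two_vertices by (simp add: q_def)
  have R_prob: "z \<in> V \<and> q \<le> P \<gamma> z w" if "R z w" for z w
    using that trans_prob_edge_ge[of z w \<gamma>] assms no_loop
    by (auto simp: R_def q_def trans_prob_def)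
  have R_loops: "y \<in> V \<Longrightarrow> (R ^^ j) y y" for y j
    by (induction j) (auto simp: R_def intro: relpowp_Suc_I)
  obtain N where N: "\<forall>s\<in>V \<times> V. \<exists>n\<le>N. (E ^^ n) (fst s) (snd s)"
    using finite_uniform_bound[of "V \<times> V" "\<lambda>s n. (E ^^ n) (fst s) (snd s)"]
      finite_vertices walk_exists by auto
  have "(R ^^ N) x y" if xy: "x \<in> V" "y \<in> V" for x y
  proof -
    obtain n where "n \<le> N" "(E ^^ n) x y" using N[rule_format, of "(x, y)"] xy by auto
    moreover have "E \<le> R" using edge_vertices by (auto simp: R_def)
    ultimately have "(R ^^ (n + (N - n))) x y"
      using R_loops[OF \<open>y \<in> V\<close>] by (blast intro: relpowp_trans relpowp_mono)
    then show ?thesis using \<open>n \<le> N\<close> by simp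
  qed
  then show ?thesis
    using walk_dist_ge_power[of R q \<gamma>] R_prob \<open>0 < q\<close> assms
    by (intro exI[of _ N] exI[of _ "q ^ N"]) auto
qed

lemma simple_walk_dist_lower_bound:
  assumes "C \<subseteq> V" and even_walks: "\<And>x y. x \<in> C \<Longrightarrow> y \<in> C \<Longrightarrow> \<exists>n. even n \<and> (E ^^ n) x y"
  shows "\<exists>m. even m \<and> (\<exists>q>0. \<forall>x\<in>C. \<forall>y\<in>C. q \<le> walk_dist V E 0 x m y)"
proof -
  define q where "q = 1 / real (card V)"
  have "0 < q" using two_vertices by (simp add: q_def)
  have edge_prob: "z \<in> V \<and> q \<le> P 0 z w" if "E z w" for z w
    using trans_prob_edge_ge[OF that, of 0] edge_vertices[OF that] by (simp add: q_def)
  obtain N where N: "\<forall>s\<in>C \<times> C. \<exists>n\<le>N. even n \<and> (E ^^ n) (fst s) (snd s)"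
    using finite_uniform_bound[of "C \<times> C" "\<lambda>s n. even n \<and> (E ^^ n) (fst s) (snd s)"]
      finite_subset[OF assms(1) finite_vertices] even_walks by auto
  have "(E ^^ (2 * N)) x y" if xy: "x \<in> C" "y \<in> C" for x y
  proof -
    obtain n where n: "n \<le> N" "even n" "(E ^^ n) x y"
      using N[rule_format, of "(x, y)"] xy by auto
    then have "(E ^^ (n + 2 * ((2 * N - n) div 2))) x y"
      using walk_add_even assms(1) xy by blast
    moreover have "n + 2 * ((2 * N - n) div 2) = 2 * N" using n(1,2) by presburger
    ultimately show ?thesis by simp
  qed
  then show ?thesis
    using walk_dist_ge_power[of E q 0] edge_prob \<open>0 < q\<close>
    by (intro exI[of _ "2 * N"] conjI exI[of _ "q ^ (2 * N)"]) auto
qed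

lemma walk_l1_tendsto_zero:
  assumes "0 \<le> \<gamma>" "\<gamma> \<le> 1" and "C \<subseteq> V" "C \<noteq> {}"
    and minor: "\<And>x y. x \<in> C \<Longrightarrow> y \<in> V \<Longrightarrow> \<rho> y \<le> walk_dist V E \<gamma> x m y"
    and "0 < (\<Sum>y\<in>V. \<rho> y)"
    and orbit: "\<And>k y. y \<in> V \<Longrightarrow> d (Suc k) y = walk_step \<gamma> (d k) y"
    and mass: "\<And>k. (\<Sum>x\<in>V. d k x) = 0"
    and supp: "\<And>j x. x \<in> V - C \<Longrightarrow> d (j * m) x = 0"
  shows "(\<lambda>k. \<Sum>x\<in>V. \<bar>d k x\<bar>) \<longlonglongrightarrow> 0"
proof (rule tendsto_zero_decreasing_geometric)
  show "(\<Sum>x\<in>V. \<bar>d (Suc k) x\<bar>) \<le> (\<Sum>x\<in>V. \<bar>d k x\<bar>)" for k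
  proof -
    have "(\<Sum>y\<in>V. \<bar>d (Suc k) y\<bar>) = (\<Sum>y\<in>V. \<bar>\<Sum>x\<in>V. d k x * P \<gamma> x y\<bar>)"
      by (intro sum.cong refl) (simp add: orbit walk_step_def)
    also have "\<dots> \<le> (1 - (\<Sum>y\<in>V. 0)) * (\<Sum>x\<in>V. \<bar>d k x\<bar>)"
      using assms(1,2) finite_vertices
      by (intro doeblin_contraction[where C = V])
        (auto simp: trans_prob_row_sum trans_prob_nonneg mass)
    finally show ?thesis by simp
  qed
  show "(\<Sum>x\<in>V. \<bar>d (Suc j * m) x\<bar>) \<le> (1 - (\<Sum>y\<in>V. \<rho> y)) * (\<Sum>x\<in>V. \<bar>d (j * m) x\<bar>)" for j
  proof -
    have "(\<Sum>y\<in>V. \<bar>d (Suc j * m) y\<bar>) = (\<Sum>y\<in>V. \<bar>\<Sum>x\<in>V. d (j * m) x * walk_dist V E \<gamma> x m y\<bar>)"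
      using walk_step_orbit_kernel[where f = d and k = "j * m" and m = m, OF orbit]
      by (intro sum.cong refl) (simp add: add.commute)
    also have "\<dots> \<le> (1 - (\<Sum>y\<in>V. \<rho> y)) * (\<Sum>x\<in>V. \<bar>d (j * m) x\<bar>)"
      using assms(3) finite_vertices
      by (intro doeblin_contraction) (auto simp: walk_dist_sum minor supp mass)
    finally show ?thesis .
  qed
  obtain x where "x \<in> C" using assms(4) by blast
  then have "(\<Sum>y\<in>V. \<rho> y) \<le> (\<Sum>y\<in>V. walk_dist V E \<gamma> x m y)"
    using minor by (intro sum_mono) auto
  then show "0 \<le> 1 - (\<Sum>y\<in>V. \<rho> y)"
    using walk_dist_sum \<open>x \<in> C\<close> assms(3) by auto
  show "1 - (\<Sum>y\<in>V. \<rho> y) < 1" using assms(6) by simp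
  show "0 \<le> (\<Sum>x\<in>V. \<bar>d k x\<bar>)" for k by (simp add: sum_nonneg)
qed

section \<open>Bipartitions and parity of walks\<close>

definition bipartition :: "'a set \<Rightarrow> bool" where
  "bipartition X \<longleftrightarrow> X \<subseteq> V \<and> (\<forall>x y. E x y \<longrightarrow> (x \<in> X \<longleftrightarrow> y \<notin> X))"

definition even_side :: "'a \<Rightarrow> 'a set" where
  "even_side u = {y \<in> V. \<exists>n. even n \<and> (E ^^ n) u y}"

lemma bipartite_iff_bipartition: "bipartite V E \<longleftrightarrow> (\<exists>X. bipartition X)"
  unfolding bipartite_def bipartition_def by auto

lemma bipartition_Diff: "bipartition X \<Longrightarrow> bipartition (V - X)"
  unfolding bipartition_def using edge_vertices by blast

lemma bipartition_walk_parity: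
  assumes "bipartition X"
  shows "(E ^^ n) x y \<Longrightarrow> (x \<in> X \<longleftrightarrow> y \<in> X) \<longleftrightarrow> even n"
proof (induction n arbitrary: y)
  case (Suc n)
  then obtain z where "(E ^^ n) x z" "E z y" by (meson relpowp_Suc_E)
  then show ?case using Suc.IH assms by (auto simp: bipartition_def)
qed simp

lemma even_side_eq:
  assumes X: "bipartition X" and "u \<in> V"
  shows "even_side u = {y \<in> V. y \<in> X \<longleftrightarrow> u \<in> X}"
proof -
  have "(\<exists>n. even n \<and> (E ^^ n) u y) \<longleftrightarrow> (y \<in> X \<longleftrightarrow> u \<in> X)" if y: "y \<in> V" for y
  proof -
    obtain n where "(E ^^ n) u y" using walk_exists[OF \<open>u \<in> V\<close> y] by blast
    then show ?thesis using bipartition_walk_parity[OF X] by blast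
  qed
  then show ?thesis unfolding even_side_def by blast
qed

lemma bipartition_even_side:
  assumes X: "bipartition X" and "u \<in> V"
  shows "bipartition (even_side u)"
proof (cases "u \<in> X")
  case True
  then have "even_side u = X"
    unfolding even_side_eq[OF assms] using X by (auto simp: bipartition_def)
  then show ?thesis using X by simp
next
  case False
  then have "even_side u = V - X" unfolding even_side_eq[OF assms] by auto
  then show ?thesis using bipartition_Diff[OF X] by simp
qed

lemma even_side_of_other:
  assumes X: "bipartition X" and "u \<in> V" "v \<in> V"
  shows "even_side v = (if v \<in> even_side u then even_side u else V - even_side u)"
  unfolding even_side_eq[OF X assms(2)] even_side_eq[OF X assms(3)] using assms(3) by auto

lemma self_in_even_side: "u \<in> V \<Longrightarrow> u \<in> even_side u"
  using even_zero relpowp_0_I[of E u] unfolding even_side_def by blast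

lemma even_walk_within_even_side:
  assumes "x \<in> even_side u" "y \<in> even_side u"
  shows "\<exists>n. even n \<and> (E ^^ n) x y"
proof -
  obtain i j where "even i" "(E ^^ i) u x" "even j" "(E ^^ j) u y"
    using assms unfolding even_side_def by blast
  then have "(E ^^ (i + j)) x y" using walk_sym by (blast intro: relpowp_trans)
  then show ?thesis using \<open>even i\<close> \<open>even j\<close> by (intro exI[of _ "i + j"]) simp
qed

lemma even_walk_if_not_bipartite:
  assumes "\<not> bipartite V E" "x \<in> V" "y \<in> V"
  shows "\<exists>n. even n \<and> (E ^^ n) x y"
proof (rule ccontr)
  assume no_even: "\<nexists>n. even n \<and> (E ^^ n) x y"
  \<comment> \<open>Then the vertices reachable from x by even walks form a colour class.\<close>
  have no_edge_inside: "\<not> E a b" if ab: "a \<in> even_side x" "b \<in> even_side x" for a b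
  proof
    assume "E a b"
    obtain i j where "even i" "(E ^^ i) x a" "even j" "(E ^^ j) x b"
      using ab unfolding even_side_def by blast
    moreover obtain l where "(E ^^ l) b y"
      using walk_exists edge_vertices[OF \<open>E a b\<close>] assms(3) by blast
    ultimately have "(E ^^ (j + l)) x y" "(E ^^ (Suc i + l)) x y"
      using \<open>E a b\<close> relpowp_trans relpowp_Suc_I by metis+
    then show False using no_even \<open>even i\<close> \<open>even j\<close> by (metis even_add even_Suc)
  qed
  have edge_into: "b \<in> even_side x" if a: "a \<in> V - even_side x" and ab: "E a b" for a b
  proof -
    obtain n where n: "(E ^^ n) x a" using walk_exists assms(2) a by blast
    then have "even (Suc n)" using a unfolding even_side_def by auto
    moreover have "(E ^^ Suc n) x b" using n ab by (rule relpowp_Suc_I)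
    ultimately show ?thesis using edge_vertices[OF ab] unfolding even_side_def by blast
  qed
  have "even_side x \<subseteq> V" by (auto simp: even_side_def)
  then have "bipartition (even_side x)"
    unfolding bipartition_def using no_edge_inside edge_into edge_vertices by blast
  then show False using assms(1) bipartite_iff_bipartition by blast
qed

section \<open>Limit distributions\<close>

definition degree_sum :: real where
  "degree_sum = (\<Sum>x\<in>V. real (degree V E x))"

definition stat :: "'a \<Rightarrow> real" where
  "stat x = real (degree V E x) / degree_sum"

text \<open>For a colour class X of a bipartition, stat_on X is stat conditioned on X: each class
  carries half of the total degree.\<close>

definition stat_on :: "'a set \<Rightarrow> 'a \<Rightarrow> real" where
  "stat_on X x = (if x \<in> X then 2 * stat x else 0)"

lemma degree_sum_pos: "0 < degree_sum"
proof -
  obtain x where "x \<in> V" using two_vertices by fastforce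
  then have "real (degree V E x) \<le> degree_sum"
    unfolding degree_sum_def using finite_vertices by (intro member_le_sum) auto
  then show ?thesis using degree_pos[OF \<open>x \<in> V\<close>] by linarith
qed

lemma stat_nonneg: "0 \<le> stat x"
  using degree_sum_pos by (simp add: stat_def)

lemma stat_sum: "(\<Sum>x\<in>V. stat x) = 1"
  using degree_sum_pos unfolding stat_def degree_sum_def by (simp flip: sum_divide_distrib)

lemma walk_step_simple_stat:
  assumes "y \<in> V"
  shows "walk_step 0 stat y = stat y"
proof -
  have "walk_step 0 stat y = (\<Sum>x\<in>V. if E x y then 1 / degree_sum else 0)"
    unfolding walk_step_simple
    by (intro sum.cong refl) (auto simp: stat_def dest: degree_pos)
  also have "\<dots> = real (card {x \<in> V. E x y}) / degree_sum"
    using finite_vertices by (simp flip: sum.inter_filter)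
  finally show ?thesis by (simp add: card_in_neighbours stat_def)
qed

lemma walk_step_stat:
  assumes "y \<in> V"
  shows "walk_step \<gamma> stat y = stat y"
  using walk_step_lazy[OF assms, of \<gamma> stat] walk_step_simple_stat[OF assms]
  by (simp add: algebra_simps)

lemma stat_on_nonneg: "0 \<le> stat_on X x"
  by (simp add: stat_on_def stat_nonneg)

lemma stat_on_add: "x \<in> V \<Longrightarrow> stat_on X x + stat_on (V - X) x = 2 * stat x"
  by (simp add: stat_on_def)

lemma walk_step_simple_stat_on:
  assumes X: "bipartition X" and "y \<in> V"
  shows "walk_step 0 (stat_on X) y = stat_on (V - X) y"
proof (cases "y \<in> X")
  case True
  then have "walk_step 0 (stat_on X) y = 0"
    using X unfolding walk_step_simple bipartition_def stat_on_def by (intro sum.neutral) auto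
  then show ?thesis using True by (simp add: stat_on_def)
next
  case False
  then have "walk_step 0 (stat_on X) y = 2 * walk_step 0 stat y"
    using X unfolding walk_step_simple bipartition_def stat_on_def sum_distrib_left
    by (intro sum.cong refl) auto
  then show ?thesis using False \<open>y \<in> V\<close> by (simp add: walk_step_simple_stat stat_on_def)
qed

lemma stat_on_sum:
  assumes X: "bipartition X"
  shows "(\<Sum>x\<in>V. stat_on X x) = 1"
proof -
  have "(\<Sum>x\<in>V. stat_on (V - X) x) = (\<Sum>x\<in>V. walk_step 0 (stat_on X) x)"
    using walk_step_simple_stat_on[OF X] by simp
  also have "\<dots> = (\<Sum>x\<in>V. stat_on X x)" by (rule walk_step_sum)
  finally have "(\<Sum>x\<in>V. stat_on (V - X) x) = (\<Sum>x\<in>V. stat_on X x)" .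
  moreover have "(\<Sum>x\<in>V. stat_on X x) + (\<Sum>x\<in>V. stat_on (V - X) x) = 2"
    using stat_sum by (simp add: stat_on_add flip: sum.distrib sum_distrib_left)
  ultimately show ?thesis by simp
qed

lemma walk_step_half_stat_on:
  assumes "bipartition X" and "y \<in> V"
  shows "walk_step (1/2) (stat_on X) y = stat y"
  using walk_step_lazy[OF assms(2), of "1/2" "stat_on X"] walk_step_simple_stat_on[OF assms]
    stat_on_add[OF assms(2), of X]
  by simp

definition aperiodic_laziness :: "real \<Rightarrow> bool" where
  "aperiodic_laziness \<gamma> \<longleftrightarrow> 0 \<le> \<gamma> \<and> \<gamma> < 1 \<and> (0 < \<gamma> \<or> \<not> bipartite V E)"

lemma walk_dist_tendsto_stat:
  assumes "w \<in> V" and "aperiodic_laziness \<gamma>"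
  shows "(\<lambda>k. \<Sum>x\<in>V. \<bar>walk_dist V E \<gamma> w k x - stat x\<bar>) \<longlonglongrightarrow> 0"
proof -
  obtain m q where "0 < q"
    and minor: "\<And>x y. x \<in> V \<Longrightarrow> y \<in> V \<Longrightarrow> q \<le> walk_dist V E \<gamma> x m y"
  proof (cases "0 < \<gamma>")
    case True
    then show ?thesis
      using lazy_walk_dist_lower_bound that assms(2) unfolding aperiodic_laziness_def by blast
  next
    case False
    then have "\<gamma> = 0" "\<not> bipartite V E" using assms(2) unfolding aperiodic_laziness_def by auto
    then show ?thesis
      using simple_walk_dist_lower_bound[OF order_refl even_walk_if_not_bipartite] that by blast
  qed
  have "0 < (\<Sum>y\<in>V. q)" using \<open>0 < q\<close> two_vertices by simp
  moreover have "walk_dist V E \<gamma> w (Suc k) y - stat y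
      = walk_step \<gamma> (\<lambda>x. walk_dist V E \<gamma> w k x - stat x) y" if "y \<in> V" for k y
    using that by (simp only: walk_dist_Suc_step walk_step_diff walk_step_stat)
  ultimately show ?thesis
    using assms minor finite_vertices
    by (intro walk_l1_tendsto_zero[where C = V and \<rho> = "\<lambda>_. q" and m = m])
       (auto simp: aperiodic_laziness_def sum_subtractf walk_dist_sum stat_sum)
qed

definition alternating :: "'a \<Rightarrow> nat \<Rightarrow> 'a \<Rightarrow> real" where
  "alternating u k = (if even k then stat_on (even_side u) else stat_on (V - even_side u))"

lemma walk_step_alternating:
  assumes "bipartition (even_side u)" and "y \<in> V"
  shows "walk_step 0 (alternating u k) y = alternating u (Suc k) y"
proof -
  have "V - (V - even_side u) = even_side u"
    using assms(1) by (auto simp: bipartition_def)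
  then show ?thesis
    using assms walk_step_simple_stat_on bipartition_Diff by (simp add: alternating_def)
qed

lemma alternating_sum: "bipartition (even_side u) \<Longrightarrow> (\<Sum>x\<in>V. alternating u k x) = 1"
  by (simp add: alternating_def stat_on_sum bipartition_Diff)

lemma walk_dist_tendsto_alternating:
  assumes "u \<in> V" and "bipartite V E"
  shows "(\<lambda>k. \<Sum>x\<in>V. \<bar>walk_dist V E 0 u k x - alternating u k x\<bar>) \<longlonglongrightarrow> 0"
proof -
  define A where "A = even_side u"
  have A: "bipartition A"
    using assms bipartition_even_side bipartite_iff_bipartition by (auto simp: A_def)
  have "A \<subseteq> V" "u \<in> A"
    using assms(1) self_in_even_side by (auto simp: A_def even_side_def)
  then obtain m q where "even m" "0 < q"
    and minor: "\<And>x y. x \<in> A \<Longrightarrow> y \<in> A \<Longrightarrow> q \<le> walk_dist V E 0 x m y"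
    using simple_walk_dist_lower_bound even_walk_within_even_side unfolding A_def by metis
  \<comment> \<open>At even times both the walk and alternating u live on A, where the m-step kernel is
    bounded below.\<close>
  have off_A: "walk_dist V E 0 u (j * m) x - alternating u (j * m) x = 0" if "x \<in> V - A" for j x
    using that \<open>even m\<close> walk_dist_simple_nonzero[of u "j * m" x]
    by (auto simp: alternating_def stat_on_def A_def even_side_def)
  have "q \<le> (\<Sum>y\<in>V. if y \<in> A then q else 0)"
    using member_le_sum[of u V "\<lambda>y. if y \<in> A then q else 0"] \<open>u \<in> A\<close> \<open>A \<subseteq> V\<close> \<open>0 < q\<close>
      finite_vertices by auto
  moreover have "walk_dist V E 0 u (Suc k) y - alternating u (Suc k) y
      = walk_step 0 (\<lambda>x. walk_dist V E 0 u k x - alternating u k x) y" if "y \<in> V" for k y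
    using that A unfolding A_def
    by (simp only: walk_dist_Suc_step walk_step_diff walk_step_alternating)
  ultimately show ?thesis
    using A \<open>A \<subseteq> V\<close> \<open>u \<in> A\<close> \<open>0 < q\<close> minor off_A assms(1)
    by (intro walk_l1_tendsto_zero[where C = A and \<rho> = "\<lambda>y. if y \<in> A then q else 0" and m = m])
       (auto simp: walk_dist_nonneg sum_subtractf walk_dist_sum alternating_sum A_def)
qed

section \<open>Wasserstein distance\<close>

lemma graph_dist_self: "graph_dist E x x = 0"
  unfolding graph_dist_def by (rule Least_eq_0) simp

lemma graph_dist_sym: "graph_dist E x y = graph_dist E y x"
proof -
  have "(\<lambda>n. (E ^^ n) x y) = (\<lambda>n. (E ^^ n) y x)" using walk_sym by blast
  then show ?thesis unfolding graph_dist_def by simp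
qed

lemma graph_dist_walk: "x \<in> V \<Longrightarrow> y \<in> V \<Longrightarrow> (E ^^ graph_dist E x y) x y"
  unfolding graph_dist_def using walk_exists by (metis LeastI_ex)

lemma graph_dist_ge_1: "x \<in> V \<Longrightarrow> y \<in> V \<Longrightarrow> x \<noteq> y \<Longrightarrow> 1 \<le> graph_dist E x y"
  using graph_dist_walk[of x y] by (cases "graph_dist E x y") auto

lemma graph_dist_edge:
  assumes "E x y"
  shows "graph_dist E x y = 1"
proof -
  have "1 \<le> graph_dist E x y"
    using assms no_loop edge_vertices[OF assms] graph_dist_ge_1 by metis
  moreover have "graph_dist E x y \<le> 1"
    unfolding graph_dist_def using assms by (intro Least_le) (simp only: relpowp_1)
  ultimately show ?thesis by simp
qed

definition diam :: real where
  "diam = Max ((\<lambda>(x, y). real (graph_dist E x y)) ` (V \<times> V))"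

lemma graph_dist_le_diam: "x \<in> V \<Longrightarrow> y \<in> V \<Longrightarrow> real (graph_dist E x y) \<le> diam"
  unfolding diam_def using finite_vertices by (intro Max_ge) force+

lemma diam_nonneg: "0 \<le> diam"
proof -
  obtain x where "x \<in> V" using two_vertices by fastforce
  then show ?thesis using graph_dist_le_diam[of x x] by simp
qed

definition cost :: "('a \<Rightarrow> 'a \<Rightarrow> real) \<Rightarrow> real" where
  "cost T = (\<Sum>x\<in>V. \<Sum>y\<in>V. real (graph_dist E x y) * T x y)"

definition prob_vec :: "('a \<Rightarrow> real) \<Rightarrow> bool" where
  "prob_vec \<mu> \<longleftrightarrow> (\<forall>x\<in>V. 0 \<le> \<mu> x) \<and> (\<Sum>x\<in>V. \<mu> x) = 1"

abbreviation W :: "('a \<Rightarrow> real) \<Rightarrow> ('a \<Rightarrow> real) \<Rightarrow> real" where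
  "W \<equiv> wasserstein V E"

lemma prob_vec_walk_dist: "w \<in> V \<Longrightarrow> 0 \<le> \<gamma> \<Longrightarrow> \<gamma> \<le> 1 \<Longrightarrow> prob_vec (walk_dist V E \<gamma> w k)"
  unfolding prob_vec_def using walk_dist_nonneg walk_dist_sum by auto

lemma prob_vec_stat: "prob_vec stat"
  unfolding prob_vec_def using stat_nonneg stat_sum by auto

lemma prob_vec_stat_on: "bipartition X \<Longrightarrow> prob_vec (stat_on X)"
  unfolding prob_vec_def using stat_on_nonneg stat_on_sum by auto

lemma prob_vec_alternating: "bipartition (even_side u) \<Longrightarrow> prob_vec (alternating u k)"
  unfolding alternating_def using prob_vec_stat_on bipartition_Diff by auto

lemma wasserstein_eq_Inf: "W \<mu> \<nu> = Inf {cost T | T. transport_plan V \<mu> \<nu> T}"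
  unfolding wasserstein_def cost_def by simp

lemma cost_nonneg: "transport_plan V \<mu> \<nu> T \<Longrightarrow> 0 \<le> cost T"
  unfolding cost_def transport_plan_def by (auto intro!: sum_nonneg mult_nonneg_nonneg)

lemma transport_plan_product:
  "prob_vec \<mu> \<Longrightarrow> prob_vec \<nu> \<Longrightarrow> transport_plan V \<mu> \<nu> (\<lambda>x y. \<mu> x * \<nu> y)"
  unfolding transport_plan_def prob_vec_def
  by (auto simp flip: sum_distrib_left sum_distrib_right)

lemma wasserstein_le_cost: "transport_plan V \<mu> \<nu> T \<Longrightarrow> W \<mu> \<nu> \<le> cost T"
  unfolding wasserstein_eq_Inf by (rule cInf_lower) (auto intro!: bdd_belowI[of _ 0] cost_nonneg)

lemma wasserstein_ge:
  "prob_vec \<mu> \<Longrightarrow> prob_vec \<nu> \<Longrightarrow> (\<And>T. transport_plan V \<mu> \<nu> T \<Longrightarrow> c \<le> cost T) \<Longrightarrow> c \<le> W \<mu> \<nu>"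
  unfolding wasserstein_eq_Inf by (rule cInf_greatest) (auto dest: transport_plan_product)

lemma wasserstein_nonneg: "prob_vec \<mu> \<Longrightarrow> prob_vec \<nu> \<Longrightarrow> 0 \<le> W \<mu> \<nu>"
  by (rule wasserstein_ge) (auto intro: cost_nonneg)

lemma wasserstein_approx:
  assumes "prob_vec \<mu>" "prob_vec \<nu>" "0 < \<epsilon>"
  shows "\<exists>T. transport_plan V \<mu> \<nu> T \<and> cost T < W \<mu> \<nu> + \<epsilon>"
proof -
  have plans: "{cost T | T. transport_plan V \<mu> \<nu> T} \<noteq> {}"
    using transport_plan_product[OF assms(1,2)] by blast
  have "Inf {cost T | T. transport_plan V \<mu> \<nu> T} < W \<mu> \<nu> + \<epsilon>"
    using assms(3) by (simp add: wasserstein_eq_Inf)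
  from cInf_lessD[OF plans this] show ?thesis by blast
qed

lemma wasserstein_cong:
  "(\<And>x. x \<in> V \<Longrightarrow> \<mu> x = \<mu>' x) \<Longrightarrow> (\<And>x. x \<in> V \<Longrightarrow> \<nu> x = \<nu>' x) \<Longrightarrow> W \<mu> \<nu> = W \<mu>' \<nu>'"
  unfolding wasserstein_eq_Inf transport_plan_def by simp

lemma wasserstein_sym: "W \<mu> \<nu> = W \<nu> \<mu>"
proof -
  have transpose: "{cost T | T. transport_plan V \<mu> \<nu> T} \<subseteq> {cost T | T. transport_plan V \<nu> \<mu> T}"
    for \<mu> \<nu>
  proof
    fix c assume "c \<in> {cost T | T. transport_plan V \<mu> \<nu> T}"
    then obtain T where "transport_plan V \<mu> \<nu> T" "c = cost T" by blast
    moreover have "cost (\<lambda>x y. T y x) = cost T"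
      unfolding cost_def by (subst sum.swap) (simp add: graph_dist_sym)
    moreover have "transport_plan V \<nu> \<mu> (\<lambda>x y. T y x)"
      using \<open>transport_plan V \<mu> \<nu> T\<close> unfolding transport_plan_def by auto
    ultimately show "c \<in> {cost T | T. transport_plan V \<nu> \<mu> T}" unfolding mem_Collect_eq by metis
  qed
  show ?thesis
    unfolding wasserstein_eq_Inf using transpose[of \<mu> \<nu>] transpose[of \<nu> \<mu>] by simp
qed

lemma wasserstein_self:
  assumes "prob_vec \<mu>"
  shows "W \<mu> \<mu> = 0"
proof -
  have "transport_plan V \<mu> \<mu> (\<lambda>x y. if x = y then \<mu> x else 0)"
    using assms finite_vertices unfolding transport_plan_def prob_vec_def
    by (auto simp: if_distrib cong: if_cong)
  then have "W \<mu> \<mu> \<le> cost (\<lambda>x y. if x = y then \<mu> x else 0)" by (rule wasserstein_le_cost)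
  also have "cost (\<lambda>x y. if x = y then \<mu> x else 0) = 0"
    unfolding cost_def by (intro sum.neutral ballI) (auto simp: graph_dist_self)
  finally show ?thesis using wasserstein_nonneg[OF assms assms] by simp
qed

lemma wasserstein_le_completed_subplan:
  assumes \<mu>: "prob_vec \<mu>" and \<nu>: "prob_vec \<nu>"
    and nonneg: "\<And>x y. x \<in> V \<Longrightarrow> y \<in> V \<Longrightarrow> 0 \<le> S x y"
    and rows: "\<And>x. x \<in> V \<Longrightarrow> (\<Sum>y\<in>V. S x y) \<le> \<mu> x"
    and cols: "\<And>y. y \<in> V \<Longrightarrow> (\<Sum>x\<in>V. S x y) \<le> \<nu> y"
  shows "W \<mu> \<nu> \<le> cost S + diam * (1 - (\<Sum>x\<in>V. \<Sum>y\<in>V. S x y))"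
proof -
  \<comment> \<open>The missing mass r is transported independently, from the row deficits e to the
    column deficits f, at cost at most diam per unit. If r = 0 both deficits vanish, so the
    junk value of the division by 0 does no harm.\<close>
  define e where "e x = \<mu> x - (\<Sum>y\<in>V. S x y)" for x
  define f where "f y = \<nu> y - (\<Sum>x\<in>V. S x y)" for y
  define r where "r = 1 - (\<Sum>x\<in>V. \<Sum>y\<in>V. S x y)"
  define T where "T x y = S x y + e x * f y / r" for x y
  have e: "x \<in> V \<Longrightarrow> 0 \<le> e x" for x
    using rows[of x] by (simp add: e_def)
  have f: "y \<in> V \<Longrightarrow> 0 \<le> f y" for y
    using cols[of y] by (simp add: f_def)
  have sum_e: "(\<Sum>x\<in>V. e x) = r"
    using \<mu> by (simp add: e_def r_def prob_vec_def sum_subtractf)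
  have sum_f: "(\<Sum>y\<in>V. f y) = r"
    using \<nu> sum.swap[of S V V] by (simp add: f_def r_def prob_vec_def sum_subtractf)
  have e_zero: "e x = 0" if "r = 0" "x \<in> V" for x
    using that sum_e e finite_vertices by (simp add: sum_nonneg_eq_0_iff)
  have f_zero: "f y = 0" if "r = 0" "y \<in> V" for y
    using that sum_f f finite_vertices by (simp add: sum_nonneg_eq_0_iff)
  have "0 \<le> r" using sum_f f by (metis sum_nonneg)
  have "transport_plan V \<mu> \<nu> T"
    unfolding transport_plan_def
  proof (intro conjI ballI)
    fix x y assume "x \<in> V" "y \<in> V"
    then show "0 \<le> T x y" using nonneg e f \<open>0 \<le> r\<close> by (simp add: T_def)
  next
    fix x assume "x \<in> V"
    have "(\<Sum>y\<in>V. T x y) = (\<Sum>y\<in>V. S x y) + e x * (\<Sum>y\<in>V. f y) / r"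
      unfolding T_def sum.distrib by (simp add: sum_distrib_left sum_divide_distrib)
    then show "(\<Sum>y\<in>V. T x y) = \<mu> x"
      using sum_f e_zero[OF _ \<open>x \<in> V\<close>] by (cases "r = 0") (auto simp: e_def)
  next
    fix y assume "y \<in> V"
    have "(\<Sum>x\<in>V. T x y) = (\<Sum>x\<in>V. S x y) + (\<Sum>x\<in>V. e x) * f y / r"
      unfolding T_def sum.distrib by (simp add: sum_distrib_right sum_divide_distrib)
    then show "(\<Sum>x\<in>V. T x y) = \<nu> y"
      using sum_e f_zero[OF _ \<open>y \<in> V\<close>] \<open>y \<in> V\<close> by (cases "r = 0") (auto simp: f_def)
  qed
  then have "W \<mu> \<nu> \<le> cost T" by (rule wasserstein_le_cost)
  also have "cost T = cost S + (\<Sum>x\<in>V. \<Sum>y\<in>V. real (graph_dist E x y) * (e x * f y / r))"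
    unfolding cost_def T_def by (simp only: distrib_left sum.distrib)
  also have "(\<Sum>x\<in>V. \<Sum>y\<in>V. real (graph_dist E x y) * (e x * f y / r))
      \<le> (\<Sum>x\<in>V. \<Sum>y\<in>V. diam * (e x * f y / r))"
    using e f \<open>0 \<le> r\<close> by (intro sum_mono mult_right_mono graph_dist_le_diam) auto
  also have "\<dots> = diam / r * (\<Sum>x\<in>V. \<Sum>y\<in>V. e x * f y)"
    by (simp add: sum_distrib_left field_simps)
  also have "\<dots> = diam / r * ((\<Sum>x\<in>V. e x) * (\<Sum>y\<in>V. f y))"
    by (simp add: sum_product)
  also have "\<dots> = diam * r"
    unfolding sum_e sum_f by (cases "r = 0") simp_all
  finally show ?thesis by (simp add: r_def)
qed

lemma wasserstein_perturb_right:
  assumes \<mu>: "prob_vec \<mu>" and \<nu>: "prob_vec \<nu>" and \<nu>': "prob_vec \<nu>'"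
  shows "W \<mu> \<nu>' \<le> W \<mu> \<nu> + diam * (\<Sum>y\<in>V. \<bar>\<nu> y - \<nu>' y\<bar>)"
proof (rule field_le_epsilon)
  fix \<epsilon> :: real assume "0 < \<epsilon>"
  then obtain T where T: "transport_plan V \<mu> \<nu> T" and "cost T < W \<mu> \<nu> + \<epsilon>"
    using wasserstein_approx \<mu> \<nu> by blast
  \<comment> \<open>Scale column y of T down to mass min (\<nu> y) (\<nu>' y); the rest is completed at cost diam.\<close>
  define c where "c y = (if \<nu> y = 0 then 0 else min (\<nu> y) (\<nu>' y) / \<nu> y)" for y
  define S where "S x y = T x y * c y" for x y
  have c: "0 \<le> c y \<and> c y \<le> 1" if "y \<in> V" for y
    using \<nu> \<nu>' that by (auto simp: c_def prob_vec_def min_def)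
  have S_bounds: "0 \<le> S x y \<and> S x y \<le> T x y" if "x \<in> V" "y \<in> V" for x y
    using T c[OF that(2)] that unfolding S_def transport_plan_def
    by (auto intro: mult_nonneg_nonneg mult_left_le)
  have S_cols: "(\<Sum>x\<in>V. S x y) = min (\<nu> y) (\<nu>' y)" if "y \<in> V" for y
    using T \<nu>' that by (auto simp: S_def c_def transport_plan_def prob_vec_def min_def
        simp flip: sum_distrib_right)
  have "W \<mu> \<nu>' \<le> cost S + diam * (1 - (\<Sum>x\<in>V. \<Sum>y\<in>V. S x y))"
  proof (rule wasserstein_le_completed_subplan[OF \<mu> \<nu>'])
    show "(\<Sum>y\<in>V. S x y) \<le> \<mu> x" if "x \<in> V" for x
    proof -
      have "(\<Sum>y\<in>V. S x y) \<le> (\<Sum>y\<in>V. T x y)" using S_bounds that by (intro sum_mono) auto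
      then show ?thesis using T that by (simp add: transport_plan_def)
    qed
  qed (use S_bounds S_cols in auto)
  moreover have "cost S \<le> cost T"
    unfolding cost_def using S_bounds by (intro sum_mono mult_left_mono) auto
  moreover have "1 - (\<Sum>x\<in>V. \<Sum>y\<in>V. S x y) = (\<Sum>y\<in>V. \<nu>' y - min (\<nu> y) (\<nu>' y))"
    using \<nu>' sum.swap[of S V V] S_cols by (simp add: prob_vec_def sum_subtractf)
  moreover have "\<dots> \<le> (\<Sum>y\<in>V. \<bar>\<nu> y - \<nu>' y\<bar>)"
    by (intro sum_mono) auto
  ultimately show "W \<mu> \<nu>' \<le> W \<mu> \<nu> + diam * (\<Sum>y\<in>V. \<bar>\<nu> y - \<nu>' y\<bar>) + \<epsilon>"
    using \<open>cost T < W \<mu> \<nu> + \<epsilon>\<close> mult_left_mono[OF _ diam_nonneg] by fastforce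
qed

lemma wasserstein_lipschitz:
  assumes "prob_vec \<mu>" "prob_vec \<nu>" "prob_vec \<mu>'" "prob_vec \<nu>'"
  shows "\<bar>W \<mu> \<nu> - W \<mu>' \<nu>'\<bar> \<le> diam * ((\<Sum>x\<in>V. \<bar>\<mu> x - \<mu>' x\<bar>) + (\<Sum>y\<in>V. \<bar>\<nu> y - \<nu>' y\<bar>))"
proof -
  have dist_sym: "(\<Sum>x\<in>V. \<bar>g x - h x\<bar>) = (\<Sum>x\<in>V. \<bar>h x - g x\<bar>)" for g h :: "'a \<Rightarrow> real"
    by (simp add: abs_minus_commute)
  have "W \<mu> \<nu>' \<le> W \<mu> \<nu> + diam * (\<Sum>y\<in>V. \<bar>\<nu> y - \<nu>' y\<bar>)"
    and "W \<nu>' \<mu>' \<le> W \<nu>' \<mu> + diam * (\<Sum>y\<in>V. \<bar>\<mu> y - \<mu>' y\<bar>)"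
    and "W \<mu> \<nu> \<le> W \<mu> \<nu>' + diam * (\<Sum>y\<in>V. \<bar>\<nu>' y - \<nu> y\<bar>)"
    and "W \<nu>' \<mu> \<le> W \<nu>' \<mu>' + diam * (\<Sum>y\<in>V. \<bar>\<mu>' y - \<mu> y\<bar>)"
    using assms by (auto intro: wasserstein_perturb_right)
  then show ?thesis
    using wasserstein_sym[of \<mu>' \<nu>'] wasserstein_sym[of \<mu> \<nu>'] dist_sym[of \<mu> \<mu>'] dist_sym[of \<nu> \<nu>']
      diam_nonneg
    by (simp add: abs_le_iff algebra_simps)
qed

lemma wasserstein_tendsto_l1:
  assumes "\<And>k. prob_vec (\<mu> k)" "\<And>k. prob_vec (\<nu> k)" "\<And>k. prob_vec (\<mu>' k)" "\<And>k. prob_vec (\<nu>' k)"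
    and "(\<lambda>k. \<Sum>x\<in>V. \<bar>\<mu> k x - \<mu>' k x\<bar>) \<longlonglongrightarrow> 0"
    and "(\<lambda>k. \<Sum>x\<in>V. \<bar>\<nu> k x - \<nu>' k x\<bar>) \<longlonglongrightarrow> 0"
    and "\<And>k. W (\<mu>' k) (\<nu>' k) = L"
  shows "(\<lambda>k. W (\<mu> k) (\<nu> k)) \<longlonglongrightarrow> L"
proof -
  let ?d = "\<lambda>k. (\<Sum>x\<in>V. \<bar>\<mu> k x - \<mu>' k x\<bar>) + (\<Sum>x\<in>V. \<bar>\<nu> k x - \<nu>' k x\<bar>)"
  have "norm (W (\<mu> k) (\<nu> k) - L) \<le> norm (?d k) * diam" for k
  proof -
    have "\<bar>W (\<mu> k) (\<nu> k) - L\<bar> \<le> diam * ?d k"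
      using wasserstein_lipschitz[OF assms(1-4)[of k]] assms(7)[of k] by simp
    also have "\<dots> \<le> \<bar>?d k\<bar> * diam"
      using diam_nonneg by (simp add: mult.commute mult_right_mono)
    finally show ?thesis by simp
  qed
  then have "\<forall>\<^sub>F k in sequentially. norm (W (\<mu> k) (\<nu> k) - L) \<le> norm (?d k) * diam"
    by (intro always_eventually allI)
  with tendsto_add_zero[OF assms(5,6)] have "(\<lambda>k. W (\<mu> k) (\<nu> k) - L) \<longlonglongrightarrow> 0"
    by (rule tendsto_0_le)
  then show ?thesis by (rule LIM_zero_cancel)
qed

lemma wasserstein_walk_step_le:
  assumes \<mu>: "prob_vec \<mu>" and "0 \<le> \<gamma>" "\<gamma> \<le> 1"
  shows "W \<mu> (walk_step \<gamma> \<mu>) \<le> 1 - \<gamma>"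
proof -
  have "transport_plan V \<mu> (walk_step \<gamma> \<mu>) (\<lambda>x y. \<mu> x * P \<gamma> x y)"
    using \<mu> assms(2,3) unfolding transport_plan_def prob_vec_def
    by (auto intro: mult_nonneg_nonneg trans_prob_nonneg
        simp: walk_step_def trans_prob_row_sum simp flip: sum_distrib_left)
  moreover have "(\<Sum>y\<in>V. real (graph_dist E x y) * P \<gamma> x y) = 1 - \<gamma>" if "x \<in> V" for x
  proof -
    have "real (graph_dist E x y) * P \<gamma> x y
        = (if E x y then (1 - \<gamma>) / real (degree V E x) else 0)" for y
      by (cases "x = y") (auto simp: trans_prob_def graph_dist_self graph_dist_edge no_loop)
    then have "(\<Sum>y\<in>V. real (graph_dist E x y) * P \<gamma> x y)
        = real (card {y \<in> V. E x y}) * ((1 - \<gamma>) / real (degree V E x))"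
      using finite_vertices by (simp add: sum.If_cases Int_def)
    then show ?thesis using degree_pos[OF that] by (simp add: degree_def)
  qed
  then have "cost (\<lambda>x y. \<mu> x * P \<gamma> x y) = 1 - \<gamma>"
    using \<mu> unfolding cost_def prob_vec_def
    by (simp add: mult.left_commute flip: sum_distrib_left sum_distrib_right)
  ultimately show ?thesis using wasserstein_le_cost by metis
qed

lemma wasserstein_ge_mass_outside:
  assumes \<mu>: "prob_vec \<mu>" and \<nu>: "prob_vec \<nu>" and supp: "\<And>x. x \<in> V - A \<Longrightarrow> \<mu> x = 0"
  shows "(\<Sum>y\<in>V - A. \<nu> y) \<le> W \<mu> \<nu>"
proof (rule wasserstein_ge[OF \<mu> \<nu>])
  fix T assume T: "transport_plan V \<mu> \<nu> T"
  then have T_nonneg: "\<And>x y. x \<in> V \<Longrightarrow> y \<in> V \<Longrightarrow> 0 \<le> T x y"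
    by (simp add: transport_plan_def)
  \<comment> \<open>All mass of \<nu> outside A comes from A, hence travels distance at least 1.\<close>
  have from_A: "T x y \<le> real (graph_dist E x y) * T x y" if "x \<in> V" "y \<in> V - A" for x y
  proof (cases "x \<in> A")
    case True
    then have "1 \<le> real (graph_dist E x y)" using graph_dist_ge_1 that by force
    then show ?thesis using T_nonneg[of x y] that by (simp add: mult_le_cancel_right1)
  next
    case False
    then have "(\<Sum>y\<in>V. T x y) = 0" using T supp that by (simp add: transport_plan_def)
    then have "T x y = 0"
      using sum_nonneg_eq_0_iff[OF finite_vertices, of "T x"] T_nonneg that by auto
    then show ?thesis by simp
  qed
  have "(\<Sum>y\<in>V - A. \<nu> y) = (\<Sum>y\<in>V - A. \<Sum>x\<in>V. T x y)"
    using T by (intro sum.cong) (auto simp: transport_plan_def)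
  also have "\<dots> \<le> (\<Sum>x\<in>V. \<Sum>y\<in>V - A. real (graph_dist E x y) * T x y)"
    using from_A by (subst sum.swap) (intro sum_mono, auto)
  also have "\<dots> \<le> cost T"
    unfolding cost_def using finite_vertices T_nonneg
    by (intro sum_mono sum_mono2) (auto intro!: mult_nonneg_nonneg)
  finally show "(\<Sum>y\<in>V - A. \<nu> y) \<le> cost T" .
qed

lemma wasserstein_stat_on_opposite:
  assumes X: "bipartition X"
  shows "W (stat_on X) (stat_on (V - X)) = 1"
proof -
  have "W (stat_on X) (stat_on (V - X)) = W (stat_on X) (walk_step 0 (stat_on X))"
    using walk_step_simple_stat_on[OF X] by (intro wasserstein_cong) simp_all
  also have "\<dots> \<le> 1"
    using wasserstein_walk_step_le[OF prob_vec_stat_on[OF X], of 0] by simp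
  finally have upper: "W (stat_on X) (stat_on (V - X)) \<le> 1" .
  have "(\<Sum>y\<in>V - X. stat_on (V - X) y) \<le> W (stat_on X) (stat_on (V - X))"
    using X by (intro wasserstein_ge_mass_outside prob_vec_stat_on bipartition_Diff)
      (simp_all add: stat_on_def)
  moreover have "(\<Sum>y\<in>V - X. stat_on (V - X) y) = (\<Sum>y\<in>V. stat_on (V - X) y)"
    by (rule sum.mono_neutral_left) (auto simp: finite_vertices stat_on_def)
  ultimately show ?thesis using upper stat_on_sum[OF bipartition_Diff[OF X]] by simp
qed

lemma wasserstein_stat_on_stat:
  assumes X: "bipartition X"
  shows "W (stat_on X) stat = 1 / 2"
proof -
  have "W (stat_on X) stat = W (stat_on X) (walk_step (1/2) (stat_on X))"
    using walk_step_half_stat_on[OF X] by (intro wasserstein_cong) simp_all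
  also have "\<dots> \<le> 1 / 2"
    using wasserstein_walk_step_le[OF prob_vec_stat_on[OF X], of "1/2"] by simp
  finally have upper: "W (stat_on X) stat \<le> 1 / 2" .
  have "(\<Sum>y\<in>V - X. stat y) \<le> W (stat_on X) stat"
    using X by (intro wasserstein_ge_mass_outside prob_vec_stat_on prob_vec_stat)
      (simp_all add: stat_on_def)
  moreover have "(\<Sum>y\<in>V - X. stat y) = (\<Sum>y\<in>V. stat_on (V - X) y) / 2"
    unfolding sum_divide_distrib
    by (rule sum.mono_neutral_cong_left) (auto simp: finite_vertices stat_on_def)
  ultimately show ?thesis using upper stat_on_sum[OF bipartition_Diff[OF X]] by simp
qed

lemma wasserstein_walks_tendsto_zero:
  assumes "u \<in> V" "v \<in> V" "aperiodic_laziness \<alpha>" "aperiodic_laziness \<beta>"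
  shows "(\<lambda>k. W (walk_dist V E \<alpha> u k) (walk_dist V E \<beta> v k)) \<longlonglongrightarrow> 0"
  using assms walk_dist_tendsto_stat[OF assms(1,3)] walk_dist_tendsto_stat[OF assms(2,4)]
  by (intro wasserstein_tendsto_l1[where \<mu>' = "\<lambda>_. stat" and \<nu>' = "\<lambda>_. stat"])
     (auto simp: aperiodic_laziness_def prob_vec_walk_dist prob_vec_stat wasserstein_self)

lemma wasserstein_walks_tendsto_laziness_one_right:
  assumes "u \<in> V" "v \<in> V" "aperiodic_laziness \<alpha>"
  shows "(\<lambda>k. W (walk_dist V E \<alpha> u k) (walk_dist V E 1 v k)) \<longlonglongrightarrow> W stat (walk_dist V E 1 v 0)"
  using assms walk_dist_tendsto_stat[OF assms(1,3)] prob_vec_walk_dist[OF assms(2), of 1 0]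
  by (intro wasserstein_tendsto_l1[where \<mu>' = "\<lambda>_. stat" and \<nu>' = "\<lambda>_. walk_dist V E 1 v 0"])
     (auto simp: aperiodic_laziness_def prob_vec_walk_dist prob_vec_stat walk_dist_laziness_one)

lemma wasserstein_walks_tendsto_half:
  assumes "u \<in> V" "v \<in> V" "bipartite V E" "0 < \<beta>" "\<beta> < 1"
  shows "(\<lambda>k. W (walk_dist V E 0 u k) (walk_dist V E \<beta> v k)) \<longlonglongrightarrow> 1 / 2"
proof -
  have A: "bipartition (even_side u)"
    using assms(1,3) bipartition_even_side bipartite_iff_bipartition by blast
  have "W (alternating u k) stat = 1 / 2" for k
    using wasserstein_stat_on_stat A bipartition_Diff by (simp add: alternating_def)
  moreover have "aperiodic_laziness \<beta>" using assms(4,5) by (simp add: aperiodic_laziness_def)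
  ultimately show ?thesis
    using assms A walk_dist_tendsto_alternating[OF assms(1,3)] walk_dist_tendsto_stat[OF assms(2)]
    by (intro wasserstein_tendsto_l1[where \<mu>' = "alternating u" and \<nu>' = "\<lambda>_. stat"])
       (auto simp: prob_vec_walk_dist prob_vec_stat prob_vec_alternating)
qed

lemma wasserstein_simple_walks_tendsto:
  assumes "u \<in> V" "v \<in> V" "bipartite V E"
  shows "(\<lambda>k. W (walk_dist V E 0 u k) (walk_dist V E 0 v k))
    \<longlonglongrightarrow> (if \<exists>n. even n \<and> (E ^^ n) u v then 0 else 1)"
proof -
  obtain X where X: "bipartition X" using assms(3) bipartite_iff_bipartition by blast
  define A where "A = even_side u"
  have A: "bipartition A" "bipartition (V - A)"
    using bipartition_even_side[OF X assms(1)] bipartition_Diff by (auto simp: A_def)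
  have "V - (V - A) = A" using A(1) by (auto simp: bipartition_def)
  then have "W (alternating u k) (alternating v k) = (if v \<in> A then 0 else 1)" for k
    using even_side_of_other[OF X assms(1,2)] A prob_vec_stat_on
      wasserstein_self wasserstein_stat_on_opposite[OF A(1)] wasserstein_stat_on_opposite[OF A(2)]
    by (auto simp: alternating_def A_def)
  moreover have "v \<in> A \<longleftrightarrow> (\<exists>n. even n \<and> (E ^^ n) u v)"
    using assms(2) by (simp add: A_def even_side_def)
  ultimately show ?thesis
    using assms bipartition_even_side[OF X] walk_dist_tendsto_alternating[OF assms(1,3)]
      walk_dist_tendsto_alternating[OF assms(2,3)]
    by (intro wasserstein_tendsto_l1[where \<mu>' = "alternating u" and \<nu>' = "alternating v"])
       (auto simp: prob_vec_walk_dist prob_vec_alternating)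
qed

end

theorem theorem3p9:
  fixes V :: "'a set" and E :: "'a \<Rightarrow> 'a \<Rightarrow> bool"
    and u v :: 'a and \<alpha> \<beta> :: real
  assumes graph: "simple_graph V E" and conn: "connected_graph V E"
    and nontriv: "card V \<ge> 2"
    and uV: "u \<in> V" and vV: "v \<in> V"
    and ab: "0 \<le> \<alpha>" "\<alpha> \<le> \<beta>" "\<beta> \<le> 1"
    and excl: "\<not> (bipartite V E \<and> \<alpha> = 0 \<and> \<beta> = 1)"
  shows "\<exists>W. (\<lambda>k. wasserstein V E (walk_dist V E \<alpha> u k) (walk_dist V E \<beta> v k)) \<longlonglongrightarrow> W
     \<and> (((0 < \<alpha> \<and> \<beta> < 1)
          \<or> (\<alpha> = 1 \<and> \<beta> = 1 \<and> u = v)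
          \<or> (\<not> bipartite V E \<and> \<alpha> = 0 \<and> \<beta> < 1)
          \<or> (\<alpha> = 0 \<and> \<beta> = 0 \<and> (\<exists>n. even n \<and> (E ^^ n) u v))) \<longrightarrow> W = 0)
     \<and> ((\<alpha> = 0 \<and> \<beta> = 0 \<and> W \<noteq> 0) \<longrightarrow> W = 1)
     \<and> ((\<alpha> = 0 \<and> 0 < \<beta> \<and> \<beta> < 1 \<and> bipartite V E) \<longrightarrow> W = 1 / 2)"
proof -
  interpret nontrivial_connected_graph V E
    using graph conn nontriv by unfold_locales
  consider (lazy) "\<alpha> = 1" "\<beta> = 1"
    | (fixed) "aperiodic_laziness \<alpha>" "\<beta> = 1"
    | (mixing) "aperiodic_laziness \<alpha>" "aperiodic_laziness \<beta>"
    | (half) "\<alpha> = 0" "0 < \<beta>" "\<beta> < 1" "bipartite V E"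
    | (simple) "\<alpha> = 0" "\<beta> = 0" "bipartite V E"
    using ab excl unfolding aperiodic_laziness_def by argo
  then show ?thesis
  proof cases
    case lazy
    then show ?thesis
      using walk_dist_laziness_one uV vV wasserstein_self[OF prob_vec_walk_dist[OF uV, of 1 0]]
      by (intro exI[of _ "W (walk_dist V E 1 u 0) (walk_dist V E 1 v 0)"]) auto
  next
    case fixed
    then show ?thesis
      using wasserstein_walks_tendsto_laziness_one_right[OF uV vV fixed(1)]
      by (intro exI[of _ "W stat (walk_dist V E 1 v 0)"]) (auto simp: aperiodic_laziness_def)
  next
    case mixing
    then show ?thesis
      using wasserstein_walks_tendsto_zero[OF uV vV mixing]
      by (intro exI[of _ 0]) (auto simp: aperiodic_laziness_def)
  next
    case half
    then show ?thesis
      using wasserstein_walks_tendsto_half[OF uV vV] by (intro exI[of _ "1 / 2"]) auto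
  next
    case simple
    then show ?thesis
      using wasserstein_simple_walks_tendsto[OF uV vV]
      by (intro exI[of _ "if \<exists>n. even n \<and> (E ^^ n) u v then 0 else 1"]) auto
  qed
qed

end
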